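(* Let $n\geq5$ and $J=J(P_n)$. Let $u,v\in G(J)$ be such that $x_{n-1}x_{n-4}$ divides $u$ and $x_nx_{n-3}$ divides $v$. Then $uv$ is not a minimal generator of $J^2$. Moreover, there exists a $2$-fold product $pw\in F(J^2)$ such that $pw$ divides $uv$ and $pw>_{\mathcal R}uv$.
   Context: Let $K$ be a field. For $m\geq 1$, $P_m$ is the path graph on vertices $x_1,\ldots,x_m$ with edges $\{x_i,x_{i+1}\}$. The cover ideal $J(P_m)$ is generated by the monomials $\prod_{x\in C}x$ with $C$ a minimal vertex cover of $P_m$. For a monomial ideal $I$, $G(I)$ is its set of minimal monomial generators and $F(I^2)=\{uv:u,v\in G(I)\}$. The rooted list $\mathcal R(P_m)$ is defined recursively: $\mathcal R(P_1)$ empty; $\mathcal R(P_2)=x_1,x_2$; $\mathcal R(P_3)=x_2,x_1x_3$; $\mathcal R(P_4)=x_1x_3,x_2x_3,x_2x_4$; for $m\geq5$, if $\mathcal R(P_{m-2})=u_1,\ldots,u_r$ and $\mathcal R(P_{m-3})=v_1,\ldots,v_s$, then $\mathcal R(P_m)=x_{m-1}u_1,\ldots,x_{m-1}u_r,x_mx_{m-2}v_1,\ldots,x_mx_{m-2}v_s$; it lists each element of $G(J(P_m))$ once. With $\mathcal R(P_m)=u_1,\ldots,u_q$, each $M\in F(J(P_m)^2)$ can be written $u_1^{a_1}\cdots u_q^{a_q}$ with $a_i\geq0$, $\sum a_i=2$; the maximal expression of $M$ is the one with lexicographically largest exponent vector. The rooted order on $F(J(P_m)^2)$: $M>_{\mathcal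 R}N$ iff the exponent vector of the maximal expression of $M$ is lexicographically larger than that of $N$. *)

theory Defs
  imports Main "HOL-Library.Multiset"
begin

text \<open>Monomials in the variables x_1, x_2, ... are encoded as multisets of indices:
  the monomial x_1^2 x_3 is the multiset {#1,1,3#}; multiplication is multiset sum
  and divisibility is multiset inclusion.\<close>

type_synonym monomial = "nat multiset"

definition path_edges :: "nat \<Rightarrow> nat set set" where
  "path_edges m = {{i, Suc i} | i. 1 \<le> i \<and> Suc i \<le> m}"

definition is_vertex_cover :: "nat \<Rightarrow> nat set \<Rightarrow> bool" where
  "is_vertex_cover m C \<longleftrightarrow> C \<subseteq> {1..m} \<and> (\<forall>e\<in>path_edges m. e \<inter> C \<noteq> {})"

definition is_min_vertex_cover :: "nat \<Rightarrow> nat set \<Rightarrow> bool" where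
  "is_min_vertex_cover m C \<longleftrightarrow> is_vertex_cover m C \<and>
     (\<forall>D. D \<subset> C \<longrightarrow> \<not> is_vertex_cover m D)"

text \<open>G(J(P_m)): the minimal monomial generators of the cover ideal.\<close>
definition cover_gens :: "nat \<Rightarrow> monomial set" where
  "cover_gens m = {mset_set C | C. is_min_vertex_cover m C}"

definition F2 :: "monomial set \<Rightarrow> monomial set" where
  "F2 G = {u + v | u v. u \<in> G \<and> v \<in> G}"

definition min_gens_sq :: "monomial set \<Rightarrow> monomial set" where
  "min_gens_sq G = {M \<in> F2 G. \<not> (\<exists>N \<in> F2 G. N \<subset># M)}"

fun rooted_list :: "nat \<Rightarrow> monomial list" where
  "rooted_list 0 = []"
| "rooted_list (Suc 0) = []"
| "rooted_list (Suc (Suc 0)) = [{#1#}, {#2#}]"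
| "rooted_list (Suc (Suc (Suc 0))) = [{#2#}, {#1, 3#}]"
| "rooted_list (Suc (Suc (Suc (Suc 0)))) = [{#1, 3#}, {#2, 3#}, {#2, 4#}]"
| "rooted_list (Suc (Suc (Suc (Suc (Suc k))))) =
     map (\<lambda>u. add_mset (k + 4) u) (rooted_list (k + 3)) @
     map (\<lambda>v. add_mset (k + 5) (add_mset (k + 3) v)) (rooted_list (k + 2))"

definition expressions :: "monomial list \<Rightarrow> monomial \<Rightarrow> nat list set" where
  "expressions R M = {a. length a = length R \<and> sum_list a = 2 \<and>
      (\<Sum>i<length R. repeat_mset (a ! i) (R ! i)) = M}"

definition max_expression :: "monomial list \<Rightarrow> monomial \<Rightarrow> nat list" where
  "max_expression R M = (THE a. a \<in> expressions R M \<and>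
      (\<forall>b \<in> expressions R M. b = a \<or> lexordp (<) b a))"

definition rooted_gt :: "nat \<Rightarrow> monomial \<Rightarrow> monomial \<Rightarrow> bool" where
  "rooted_gt m M N \<longleftrightarrow>
     lexordp (<) (max_expression (rooted_list m) N) (max_expression (rooted_list m) M)"

end

theory Submission
  imports Defs "HOL-Library.Multiset_Order" "HOL-Library.List_Lexorder"
begin

text \<open>
  Write n = k + 5 and let U, V be the minimal vertex covers with u = x_U and v = x_V.
  Swapping the parts of U and V above k + 1 yields the minimal covers
  P = (U \<inter> [1, k]) \<union> {k+1, k+3, k+5} and W = (V \<inter> [1, k+1]) \<union> {k+2, k+4},
  and x_P x_W properly divides uv because U and V share the vertex k + 2 or k + 3.

  The rooted list enumerates the minimal covers of P_m in increasing multiset order of their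
  monomials: C comes before D iff the largest vertex in which they differ lies in D.
  Every factorisation uv = x_S x_T into minimal covers has S and T after W, while W comes
  before P; so the exponent vector of x_W x_P exceeds the maximal expression of uv
  lexicographically, the first difference being at the position of W.
\<close>

section \<open>Squarefree monomials\<close>

lemma mset_set_less_mset_setI:
  fixes A B :: "'a::linorder set"
  assumes "finite A" "finite B" "t \<in> B" "t \<notin> A" "\<And>s. t < s \<Longrightarrow> s \<in> A \<longleftrightarrow> s \<in> B"
  shows "mset_set A < mset_set B"
  unfolding less_multiset\<^sub>H\<^sub>O
proof (intro conjI allI impI)
  show "mset_set A \<noteq> mset_set B"
    using assms by (metis count_mset_set(1,3) zero_neq_one)
  fix y assume "count (mset_set B) y < count (mset_set A) y"
  then have "y \<in> A" "y \<notin> B" using assms(1,2) by (auto simp: count_mset_set' split: if_splits)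
  then have "y < t" using assms(3,5) by (metis linorder_neqE)
  then show "\<exists>x>y. count (mset_set A) x < count (mset_set B) x"
    using assms by (intro exI[of _ t]) simp
qed

lemma mset_set_plus_eqD:
  assumes "finite A" "finite B" "finite C" "finite D"
    and "mset_set A + mset_set B = mset_set C + mset_set D"
  shows "A \<union> B = C \<union> D" "A \<inter> B = C \<inter> D"
proof -
  have count_eq: "of_bool (x \<in> A) + of_bool (x \<in> B) = (of_bool (x \<in> C) + of_bool (x \<in> D) :: nat)" for x
  proof -
    have "count (mset_set X) x = of_bool (x \<in> X)" if "finite X" for X
      using that by simp
    then show ?thesis
      using arg_cong[OF assms(5), of "\<lambda>M. count M x"] assms(1-4) by (simp only: count_union)
  qed
  have union: "x \<in> X \<union> Y \<longleftrightarrow> 0 < (of_bool (x \<in> X) + of_bool (x \<in> Y) :: nat)" for x X Y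
    by auto
  have inter: "x \<in> X \<inter> Y \<longleftrightarrow> (of_bool (x \<in> X) + of_bool (x \<in> Y) :: nat) = 2" for x X Y
    by auto
  show "A \<union> B = C \<union> D" "A \<inter> B = C \<inter> D"
    unfolding set_eq_iff union inter count_eq by simp_all
qed

lemma mset_set_plus_subset_mset:
  assumes "finite C" "finite D" "A \<union> B \<subseteq> C \<union> D" "A \<inter> B \<subset> C \<inter> D"
  shows "mset_set A + mset_set B \<subset># mset_set C + mset_set D"
proof -
  have "finite A" "finite B"
    using assms(1-3) by (meson finite_Un finite_subset le_sup_iff)+
  have "count (mset_set A + mset_set B) x \<le> count (mset_set C + mset_set D) x" for x
    using assms(3,4) \<open>finite A\<close> \<open>finite B\<close> assms(1,2) by (auto simp: count_mset_set')
  moreover obtain x where "x \<in> C \<inter> D" "x \<notin> A \<inter> B" using assms(4) by blast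
  then have "count (mset_set A + mset_set B) x < count (mset_set C + mset_set D) x"
    using \<open>finite A\<close> \<open>finite B\<close> assms(1,2) by (auto simp: count_mset_set')
  ultimately show ?thesis
    by (metis mset_subset_eqI subset_mset.le_neq_trans less_irrefl)
qed

section \<open>Minimal vertex covers of paths\<close>

lemma is_vertex_cover_iff:
  "is_vertex_cover m C \<longleftrightarrow> C \<subseteq> {1..m} \<and> (\<forall>i. 1 \<le> i \<and> i < m \<longrightarrow> i \<in> C \<or> Suc i \<in> C)"
proof -
  have "path_edges m = (\<lambda>i. {i, Suc i}) ` {i. 1 \<le> i \<and> i < m}"
    unfolding path_edges_def by auto
  then show ?thesis
    unfolding is_vertex_cover_def by auto
qed

lemma is_min_vertex_cover_iff:
  "is_min_vertex_cover m C \<longleftrightarrow>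
     is_vertex_cover m C \<and> (\<forall>c\<in>C. (2 \<le> c \<and> c - 1 \<notin> C) \<or> (c < m \<and> Suc c \<notin> C))"
proof (intro iffI conjI)
  assume min: "is_min_vertex_cover m C"
  then show cover: "is_vertex_cover m C"
    by (simp add: is_min_vertex_cover_def)
  show "\<forall>c\<in>C. (2 \<le> c \<and> c - 1 \<notin> C) \<or> (c < m \<and> Suc c \<notin> C)"
  proof (rule ballI, rule ccontr)
    fix c assume "c \<in> C"
      and no_private_edge: "\<not> ((2 \<le> c \<and> c - 1 \<notin> C) \<or> (c < m \<and> Suc c \<notin> C))"
    have "is_vertex_cover m (C - {c})"
      unfolding is_vertex_cover_iff
    proof (intro conjI allI impI)
      show "C - {c} \<subseteq> {1..m}" using cover by (auto simp: is_vertex_cover_iff)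
      fix i assume "1 \<le> i \<and> i < m"
      then show "i \<in> C - {c} \<or> Suc i \<in> C - {c}"
        using cover no_private_edge by (auto simp: is_vertex_cover_iff)
    qed
    moreover have "C - {c} \<subset> C" using \<open>c \<in> C\<close> by auto
    ultimately show False using min by (simp add: is_min_vertex_cover_def)
  qed
next
  assume "is_vertex_cover m C \<and> (\<forall>c\<in>C. (2 \<le> c \<and> c - 1 \<notin> C) \<or> (c < m \<and> Suc c \<notin> C))"
  then have cover: "is_vertex_cover m C"
    and private_edge: "\<And>c. c \<in> C \<Longrightarrow> (2 \<le> c \<and> c - 1 \<notin> C) \<or> (c < m \<and> Suc c \<notin> C)"
    by auto
  have "\<not> is_vertex_cover m D" if "D \<subset> C" for D
  proof
    assume D: "is_vertex_cover m D"
    obtain c where c: "c \<in> C" "c \<notin> D" using \<open>D \<subset> C\<close> by auto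
    then have "1 \<le> c" using cover by (auto simp: is_vertex_cover_iff)
    from private_edge[OF \<open>c \<in> C\<close>] show False
    proof
      assume "2 \<le> c \<and> c - 1 \<notin> C"
      moreover have "c \<le> m" using c cover by (auto simp: is_vertex_cover_iff)
      ultimately have "1 \<le> c - 1 \<and> c - 1 < m" by linarith
      then have "c - 1 \<in> D \<or> Suc (c - 1) \<in> D"
        using D unfolding is_vertex_cover_iff by blast
      then show False using \<open>2 \<le> c \<and> c - 1 \<notin> C\<close> \<open>D \<subset> C\<close> c by auto
    next
      assume "c < m \<and> Suc c \<notin> C"
      then have "c \<in> D \<or> Suc c \<in> D"
        using D \<open>1 \<le> c\<close> by (auto simp: is_vertex_cover_iff)
      then show False using \<open>c < m \<and> Suc c \<notin> C\<close> \<open>D \<subset> C\<close> c by auto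
    qed
  qed
  then show "is_min_vertex_cover m C"
    using cover by (simp add: is_min_vertex_cover_def)
qed

lemmas is_min_vertex_cover_altdef = is_min_vertex_cover_iff[unfolded is_vertex_cover_iff]

lemma min_vertex_cover_subset: "is_min_vertex_cover m C \<Longrightarrow> C \<subseteq> {1..m}"
  by (simp add: is_min_vertex_cover_altdef)

lemma finite_min_vertex_cover: "is_min_vertex_cover m C \<Longrightarrow> finite C"
  using min_vertex_cover_subset finite_subset by blast

lemma min_vertex_cover_edge:
  assumes "is_min_vertex_cover m C" "j = Suc i" "1 \<le> i" "j \<le> m"
  shows "i \<in> C \<or> j \<in> C"
  using assms unfolding is_min_vertex_cover_altdef by auto

lemma min_vertex_cover_top:
  assumes "is_min_vertex_cover m C" "m \<in> C" "m = Suc i"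
  shows "i \<notin> C"
  using assms unfolding is_min_vertex_cover_altdef by fastforce

lemma min_vertex_cover_no_three_consecutive:
  assumes "is_min_vertex_cover m C" "i \<in> C" "j \<in> C" "l \<in> C" "j = Suc i" "l = Suc j"
  shows False
  using assms unfolding is_min_vertex_cover_altdef by fastforce

lemma min_vertex_cover_restrict:
  assumes "is_min_vertex_cover m C" "Suc j \<in> C"
  shows "is_min_vertex_cover j (C \<inter> {..j})"
proof -
  have "C \<subseteq> {1..m}" and cover: "\<And>i. 1 \<le> i \<Longrightarrow> i < m \<Longrightarrow> i \<in> C \<or> Suc i \<in> C"
    and private_edge: "\<And>c. c \<in> C \<Longrightarrow> (2 \<le> c \<and> c - 1 \<notin> C) \<or> (c < m \<and> Suc c \<notin> C)"
    using assms(1) unfolding is_min_vertex_cover_altdef by auto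
  then have "j < m" using assms(2) by auto
  show ?thesis
    unfolding is_min_vertex_cover_altdef
  proof (intro conjI allI impI ballI)
    show "C \<inter> {..j} \<subseteq> {1..j}" using \<open>C \<subseteq> {1..m}\<close> by auto
    fix i assume "1 \<le> i \<and> i < j"
    then show "i \<in> C \<inter> {..j} \<or> Suc i \<in> C \<inter> {..j}" using cover[of i] \<open>j < m\<close> by auto
  next
    fix c assume "c \<in> C \<inter> {..j}"
    then show "(2 \<le> c \<and> c - 1 \<notin> C \<inter> {..j}) \<or> (c < j \<and> Suc c \<notin> C \<inter> {..j})"
      using private_edge[of c] assms(2) by (auto simp: le_less)
  qed
qed

lemma min_vertex_cover_extend_1:
  assumes "is_min_vertex_cover k C"
  shows "is_min_vertex_cover (k + 2) (insert (k + 1) C)"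
proof -
  have "C \<subseteq> {1..k}" and cover: "\<And>i. 1 \<le> i \<Longrightarrow> i < k \<Longrightarrow> i \<in> C \<or> Suc i \<in> C"
    and private_edge: "\<And>c. c \<in> C \<Longrightarrow> (2 \<le> c \<and> c - 1 \<notin> C) \<or> (c < k \<and> Suc c \<notin> C)"
    using assms unfolding is_min_vertex_cover_altdef by auto
  show ?thesis
    unfolding is_min_vertex_cover_altdef
  proof (intro conjI allI impI ballI)
    show "insert (k + 1) C \<subseteq> {1..k + 2}" using \<open>C \<subseteq> {1..k}\<close> by auto
    fix i assume "1 \<le> i \<and> i < k + 2"
    then show "i \<in> insert (k + 1) C \<or> Suc i \<in> insert (k + 1) C"
      using cover[of i] by (cases "i < k") auto
  next
    fix c assume c: "c \<in> insert (k + 1) C"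
    show "(2 \<le> c \<and> c - 1 \<notin> insert (k + 1) C) \<or> (c < k + 2 \<and> Suc c \<notin> insert (k + 1) C)"
    proof (cases "c = k + 1")
      case False
      then have "c \<in> C" "c \<le> k" using c \<open>C \<subseteq> {1..k}\<close> by auto
      then show ?thesis using private_edge[of c] \<open>C \<subseteq> {1..k}\<close> by auto
    qed (use \<open>C \<subseteq> {1..k}\<close> in auto)
  qed
qed

lemma min_vertex_cover_extend_2:
  assumes "is_min_vertex_cover k C"
  shows "is_min_vertex_cover (k + 3) (insert (k + 3) (insert (k + 1) C))"
proof -
  have "C \<subseteq> {1..k}" and cover: "\<And>i. 1 \<le> i \<Longrightarrow> i < k \<Longrightarrow> i \<in> C \<or> Suc i \<in> C"
    and private_edge: "\<And>c. c \<in> C \<Longrightarrow> (2 \<le> c \<and> c - 1 \<notin> C) \<or> (c < k \<and> Suc c \<notin> C)"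
    using assms unfolding is_min_vertex_cover_altdef by auto
  let ?D = "insert (k + 3) (insert (k + 1) C)"
  show ?thesis
    unfolding is_min_vertex_cover_altdef
  proof (intro conjI allI impI ballI)
    show "?D \<subseteq> {1..k + 3}" using \<open>C \<subseteq> {1..k}\<close> by auto
    fix i assume "1 \<le> i \<and> i < k + 3"
    then show "i \<in> ?D \<or> Suc i \<in> ?D"
      using cover[of i] by (cases "i < k") auto
  next
    fix c assume c: "c \<in> ?D"
    show "(2 \<le> c \<and> c - 1 \<notin> ?D) \<or> (c < k + 3 \<and> Suc c \<notin> ?D)"
    proof (cases "c = k + 1 \<or> c = k + 3")
      case False
      then have "c \<in> C" "c \<le> k" using c \<open>C \<subseteq> {1..k}\<close> by auto
      then show ?thesis using private_edge[of c] \<open>C \<subseteq> {1..k}\<close> by auto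
    qed (use \<open>C \<subseteq> {1..k}\<close> in auto)
  qed
qed

lemma min_vertex_covers_rec:
  "{C. is_min_vertex_cover (k + 3) C} =
     insert (k + 2) ` {C. is_min_vertex_cover (k + 1) C} \<union>
     (\<lambda>C. insert (k + 3) (insert (k + 1) C)) ` {C. is_min_vertex_cover k C}"
proof (intro equalityI subsetI)
  fix C assume "C \<in> {C. is_min_vertex_cover (k + 3) C}"
  then have min: "is_min_vertex_cover (k + 3) C" by simp
  have le: "x \<le> k + 3" if "x \<in> C" for x
    using min_vertex_cover_subset[OF min] that by auto
  have succ: "k + 3 = Suc (k + 2)" "k + 2 = Suc (k + 1)" by simp_all
  show "C \<in> insert (k + 2) ` {C. is_min_vertex_cover (k + 1) C} \<union>
     (\<lambda>C. insert (k + 3) (insert (k + 1) C)) ` {C. is_min_vertex_cover k C}"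
  proof (cases "k + 3 \<in> C")
    case True
    then have "k + 2 \<notin> C" using min_vertex_cover_top[OF min _ succ(1)] by blast
    then have "k + 1 \<in> C" using min_vertex_cover_edge[OF min succ(2)] by simp
    then have "is_min_vertex_cover k (C \<inter> {..k})"
      using min_vertex_cover_restrict[OF min] by simp
    moreover have "C = insert (k + 3) (insert (k + 1) (C \<inter> {..k}))"
    proof -
      have "x \<le> k \<or> x = k + 1 \<or> x = k + 2 \<or> x = k + 3" if "x \<in> C" for x
        using le[OF that] by arith
      then show ?thesis using True \<open>k + 2 \<notin> C\<close> \<open>k + 1 \<in> C\<close> by auto
    qed
    ultimately show ?thesis by blast
  next
    case False
    then have "k + 2 \<in> C" using min_vertex_cover_edge[OF min succ(1)] by simp
    then have "is_min_vertex_cover (k + 1) (C \<inter> {..k + 1})"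
      using min_vertex_cover_restrict[OF min] by simp
    moreover have "C = insert (k + 2) (C \<inter> {..k + 1})"
    proof -
      have "x \<le> k + 1 \<or> x = k + 2 \<or> x = k + 3" if "x \<in> C" for x
        using le[OF that] by arith
      then show ?thesis using False \<open>k + 2 \<in> C\<close> by auto
    qed
    ultimately show ?thesis by blast
  qed
next
  fix C assume "C \<in> insert (k + 2) ` {C. is_min_vertex_cover (k + 1) C} \<union>
     (\<lambda>C. insert (k + 3) (insert (k + 1) C)) ` {C. is_min_vertex_cover k C}"
  then consider (top_2) D where "C = insert (k + 2) D" "is_min_vertex_cover (k + 1) D"
    | (top_3) D where "C = insert (k + 3) (insert (k + 1) D)" "is_min_vertex_cover k D"
    by blast
  then show "C \<in> {C. is_min_vertex_cover (k + 3) C}"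
  proof cases
    case top_2
    have "k + 1 + 2 = k + 3" "k + 1 + 1 = k + 2" by simp_all
    then show ?thesis using min_vertex_cover_extend_1[OF top_2(2)] top_2(1) by (simp only: mem_Collect_eq)
  next
    case top_3
    then show ?thesis using min_vertex_cover_extend_2 by simp
  qed
qed

lemma min_vertex_cover_le_1_iff: "m \<le> 1 \<Longrightarrow> is_min_vertex_cover m C \<longleftrightarrow> C = {}"
  unfolding is_min_vertex_cover_altdef by (fastforce simp: subset_iff)

lemma min_vertex_cover_2_iff: "is_min_vertex_cover 2 C \<longleftrightarrow> C = {1} \<or> C = {2}"
proof
  assume "is_min_vertex_cover 2 C"
  then have "C \<subseteq> {1..2}" and cover: "\<forall>i. 1 \<le> i \<and> i < 2 \<longrightarrow> i \<in> C \<or> Suc i \<in> C"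
    and private_edge: "\<forall>c\<in>C. (2 \<le> c \<and> c - 1 \<notin> C) \<or> (c < 2 \<and> Suc c \<notin> C)"
    unfolding is_min_vertex_cover_altdef by auto
  have "1 \<in> C \<or> 2 \<in> C" using cover[rule_format, of 1] by (simp add: numeral_2_eq_2)
  moreover have "1 \<in> C \<longrightarrow> 2 \<notin> C" using private_edge[rule_format, of 1] by (simp add: numeral_2_eq_2)
  moreover have "C \<subseteq> {1, 2}" using \<open>C \<subseteq> {1..2}\<close> by auto
  ultimately show "C = {1} \<or> C = {2}" by auto
qed (auto simp: is_min_vertex_cover_altdef less_2_cases_iff)

lemma cover_gens_eq_image: "cover_gens m = mset_set ` {C. is_min_vertex_cover m C}"
  unfolding cover_gens_def by blast

lemma cover_gens_rec:
  "cover_gens (k + 3) =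
     add_mset (k + 2) ` cover_gens (k + 1) \<union>
     (\<lambda>v. add_mset (k + 3) (add_mset (k + 1) v)) ` cover_gens k"
proof -
  have "mset_set (insert (k + 2) C) = add_mset (k + 2) (mset_set C)"
    if "is_min_vertex_cover (k + 1) C" for C
  proof -
    have "k + 2 \<notin> C" using min_vertex_cover_subset[OF that] by auto
    then show ?thesis using finite_min_vertex_cover[OF that] by simp
  qed
  moreover have "mset_set (insert (k + 3) (insert (k + 1) C)) =
      add_mset (k + 3) (add_mset (k + 1) (mset_set C))"
    if "is_min_vertex_cover k C" for C
  proof -
    have "k + 3 \<notin> C" "k + 1 \<notin> C" using min_vertex_cover_subset[OF that] by auto
    then show ?thesis using finite_min_vertex_cover[OF that] by simp
  qed
  ultimately show ?thesis
    unfolding cover_gens_eq_image min_vertex_covers_rec image_Un image_image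
    by (intro arg_cong2[where f = "(\<union>)"] image_cong) simp_all
qed

lemma cover_gens_le_1: "m \<le> 1 \<Longrightarrow> cover_gens m = {{#}}"
  by (simp add: cover_gens_eq_image min_vertex_cover_le_1_iff)

lemma cover_gens_2: "cover_gens 2 = {{#1#}, {#2#}}"
proof -
  have "{C. C = {1} \<or> C = {2::nat}} = {{1}, {2}}" by auto
  then show ?thesis by (simp add: cover_gens_eq_image min_vertex_cover_2_iff)
qed

section \<open>The rooted list\<close>

lemma rooted_list_2: "rooted_list 2 = [{#1#}, {#2#}]"
  by (simp add: numeral_eq_Suc)

lemma rooted_list_3: "rooted_list 3 = [{#2#}, {#1, 3#}]"
  by (simp add: numeral_eq_Suc)

lemma rooted_list_4: "rooted_list 4 = [{#1, 3#}, {#2, 3#}, {#2, 4#}]"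
  by (simp add: numeral_eq_Suc)

lemma rooted_list_rec:
  "rooted_list (k + 5) =
     map (add_mset (k + 4)) (rooted_list (k + 3)) @
     map (\<lambda>v. add_mset (k + 5) (add_mset (k + 3) v)) (rooted_list (k + 2))"
  by (simp add: numeral_eq_Suc)

lemma rooted_list_cases [consumes 1, case_names two three four rec]:
  fixes m :: nat
  assumes "2 \<le> m" "m = 2 \<Longrightarrow> P" "m = 3 \<Longrightarrow> P" "m = 4 \<Longrightarrow> P" "\<And>k. m = k + 5 \<Longrightarrow> P"
  shows P
proof -
  have "m = 2 \<or> m = 3 \<or> m = 4 \<or> m = (m - 5) + 5" using \<open>2 \<le> m\<close> by arith
  then show P using assms by blast
qed

lemma set_rooted_list: "2 \<le> m \<Longrightarrow> set (rooted_list m) = cover_gens m"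
proof (induction m rule: less_induct)
  case (less m)
  from \<open>2 \<le> m\<close> show ?case
  proof (cases rule: rooted_list_cases)
    case two
    then show ?thesis by (simp add: rooted_list_2 cover_gens_2)
  next
    case three
    then show ?thesis
      using cover_gens_rec[of 0, unfolded add_0]
      by (simp add: rooted_list_3 cover_gens_le_1 add_mset_commute insert_commute)
  next
    case four
    have one_plus: "(1::nat) + 3 = 4" "(1::nat) + 2 = 3" "(1::nat) + 1 = 2" by simp_all
    show ?thesis
      using four cover_gens_rec[of 1, unfolded one_plus]
      by (simp add: rooted_list_4 cover_gens_le_1 cover_gens_2 add_mset_commute insert_commute)
  next
    case (rec k)
    have "set (rooted_list (k + 2)) = cover_gens (k + 2)" "set (rooted_list (k + 3)) = cover_gens (k + 3)"
      using less.IH rec by simp_all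
    moreover have "k + 2 + 3 = k + 5" "k + 2 + 2 = k + 4" "k + 2 + 1 = k + 3" by simp_all
    ultimately show ?thesis
      using cover_gens_rec[of "k + 2"] rec by (simp only: rooted_list_rec set_append set_map)
  qed
qed

lemma rooted_list_elem_le: "x \<in> set (rooted_list m) \<Longrightarrow> a \<in># x \<Longrightarrow> a \<le> m"
proof (cases "2 \<le> m")
  case True
  assume "x \<in> set (rooted_list m)" "a \<in># x"
  then obtain C where "is_min_vertex_cover m C" "x = mset_set C"
    using set_rooted_list[OF True] by (auto simp: cover_gens_eq_image)
  then show ?thesis
    using \<open>a \<in># x\<close> min_vertex_cover_subset finite_min_vertex_cover by fastforce
next
  case False
  then have "m = 0 \<or> m = 1" by arith
  then show "x \<in> set (rooted_list m) \<Longrightarrow> a \<in># x \<Longrightarrow> a \<le> m" by auto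
qed

lemma sorted_rooted_list: "sorted_wrt (<) (rooted_list m)"
proof (induction m rule: less_induct)
  case (less m)
  show ?case
  proof (cases "2 \<le> m")
    case False
    then have "m = 0 \<or> m = 1" by arith
    then show ?thesis by auto
  next
    case True
    then show ?thesis
    proof (cases rule: rooted_list_cases)
      case two
      then show ?thesis by (simp add: rooted_list_2)
    next
      case three
      have "{#2#} < {#1, 3::nat#}" by (rule ex_gt_imp_less_multiset) auto
      then show ?thesis using three by (simp add: rooted_list_3)
    next
      case four
      have "{#1, 3#} < {#2, 3::nat#}" by (rule add_mset_lt_lt_le) auto
      moreover have "{#1, 3#} < {#2, 4::nat#}" "{#2, 3#} < {#2, 4::nat#}"
        by (rule ex_gt_imp_less_multiset, force)+
      ultimately show ?thesis using four by (simp add: rooted_list_4)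
    next
      case (rec k)
      have "sorted_wrt (<) (rooted_list (k + 2))" "sorted_wrt (<) (rooted_list (k + 3))"
        using less.IH rec by simp_all
      moreover have "add_mset (k + 4) x < add_mset (k + 5) (add_mset (k + 3) y)"
        if "x \<in> set (rooted_list (k + 3))" for x y
      proof (rule ex_gt_imp_less_multiset)
        show "\<exists>z. z \<in># add_mset (k + 5) (add_mset (k + 3) y) \<and> (\<forall>a. a \<in># add_mset (k + 4) x \<longrightarrow> a < z)"
          using rooted_list_elem_le[OF that] by (intro exI[of _ "k + 5"]) fastforce
      qed
      ultimately show ?thesis
        unfolding rec rooted_list_rec sorted_wrt_append sorted_wrt_map
        by (auto elim!: sorted_wrt_mono_rel[rotated] intro: add_mset_lt_right_lt)
    qed
  qed
qed

lemma sorted_wrt_less_nth_imp_less: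
  fixes xs :: "'a::linorder list"
  assumes "sorted_wrt (<) xs" "i < length xs" "j < length xs" "xs ! i < xs ! j"
  shows "i < j"
proof (rule ccontr)
  assume "\<not> i < j"
  then have "j < i \<or> j = i" by arith
  then show False
    using sorted_wrt_nth_less[OF assms(1) _ assms(2)] assms(4) by (auto dest: less_asym)
qed

section \<open>Maximal expressions\<close>

lemma lexordp_less_iff_less: "List.lexordp (<) xs ys \<longleftrightarrow> xs < (ys :: 'a::linorder list)"
  by (simp add: List.lexordp_def list_less_def)

definition pair_exponents :: "nat \<Rightarrow> nat \<Rightarrow> nat \<Rightarrow> nat list" where
  "pair_exponents q i j = map (\<lambda>t. of_bool (t = i) + of_bool (t = j)) [0..<q]"

lemma pair_exponents_in_expressions:
  assumes "i < length R" "j < length R"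
  shows "pair_exponents (length R) i j \<in> expressions R (R ! i + R ! j)"
proof -
  let ?a = "pair_exponents (length R) i j"
  have "sum_list ?a = (\<Sum>t<length R. of_bool (t = i) + of_bool (t = j))"
    unfolding pair_exponents_def by (simp add: interv_sum_list_conv_sum_set_nat lessThan_atLeast0)
  also have "\<dots> = 2" using assms by (simp add: sum.distrib)
  finally have "sum_list ?a = 2" .
  moreover have "(\<Sum>t<length R. repeat_mset (?a ! t) (R ! t)) =
      (\<Sum>t<length R. (if t = i then R ! t else {#}) + (if t = j then R ! t else {#}))"
    by (rule sum.cong) (auto simp: pair_exponents_def repeat_mset_distrib)
  ultimately show ?thesis
    using assms by (simp add: expressions_def pair_exponents_def sum.distrib)
qed

lemma expressions_nth_nonzero:
  assumes a: "a \<in> expressions R M" and t: "t < length R" "a ! t \<noteq> 0"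
  shows "\<exists>s<length R. M = R ! t + R ! s"
proof -
  let ?I = "{..<length R} - {t}"
  have "length a = length R" "sum_list a = 2" using a by (simp_all add: expressions_def)
  then have "2 = a ! t + (\<Sum>i\<in>?I. a ! i)"
    using t sum.remove[of "{..<length R}" t "(!) a"] by (simp add: sum_list_sum_nth lessThan_atLeast0)
  moreover have M: "M = repeat_mset (a ! t) (R ! t) + (\<Sum>i\<in>?I. repeat_mset (a ! i) (R ! i))"
    using a t sum.remove[of "{..<length R}" t "\<lambda>i. repeat_mset (a ! i) (R ! i)"]
    by (simp add: expressions_def)
  ultimately consider "a ! t = 2" "(\<Sum>i\<in>?I. a ! i) = 0" | "a ! t = 1" "(\<Sum>i\<in>?I. a ! i) = 1"
    using t(2) by linarith
  then show ?thesis
  proof cases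
    case 1
    then have "(\<Sum>i\<in>?I. repeat_mset (a ! i) (R ! i)) = {#}" by simp
    then show ?thesis using M 1 t by (intro exI[of _ t]) (simp add: numeral_2_eq_2)
  next
    case 2
    have "\<exists>s\<in>?I. a ! s = 1 \<and> (\<forall>i\<in>?I. s \<noteq> i \<longrightarrow> a ! i = 0)"
      using 2(2) by (subst (asm) sum_eq_1_iff) auto
    then obtain s where s: "s \<in> ?I" "a ! s = 1" "\<forall>i\<in>?I. s \<noteq> i \<longrightarrow> a ! i = 0"
      by (elim bexE conjE)
    then have "(\<Sum>i\<in>?I. repeat_mset (a ! i) (R ! i)) = (\<Sum>i\<in>?I. if i = s then R ! i else {#})"
      by (intro sum.cong) auto
    also have "\<dots> = R ! s" using s(1) by simp
    finally show ?thesis using M 2 s(1) by auto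
  qed
qed

lemma finite_expressions: "finite (expressions R M)"
proof (rule finite_subset)
  show "expressions R M \<subseteq> {a. set a \<subseteq> {0..2} \<and> length a = length R}"
    unfolding expressions_def using member_le_sum_list by fastforce
  show "finite {a. set a \<subseteq> {0..2::nat} \<and> length a = length R}"
    by (rule finite_lists_length_eq) simp
qed

lemma max_expression_eq_Max:
  assumes "expressions R M \<noteq> {}"
  shows "max_expression R M = Max (expressions R M)"
  unfolding max_expression_def lexordp_less_iff_less
proof (rule the_equality)
  show "Max (expressions R M) \<in> expressions R M \<and>
      (\<forall>b\<in>expressions R M. b = Max (expressions R M) \<or> b < Max (expressions R M))"
  proof (intro conjI ballI)
    show "Max (expressions R M) \<in> expressions R M"
      using assms finite_expressions by (rule Max_in[rotated])
    fix b assume "b \<in> expressions R M"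
    then show "b = Max (expressions R M) \<or> b < Max (expressions R M)"
      using Max_ge[OF finite_expressions \<open>b \<in> expressions R M\<close>] unfolding le_less by blast
  qed
  fix a assume "a \<in> expressions R M \<and> (\<forall>b\<in>expressions R M. b = a \<or> b < a)"
  then show "a = Max (expressions R M)"
    using finite_expressions by (intro Max_eqI[symmetric]) auto
qed

lemma max_expression_less:
  assumes "i < length R" "j < length R" "c \<le> d" "d < length R"
    and factors_above: "\<And>s t. s < length R \<Longrightarrow> t < length R \<Longrightarrow> R ! s + R ! t = R ! i + R ! j \<Longrightarrow> c < s"
  shows "max_expression R (R ! i + R ! j) < max_expression R (R ! c + R ! d)"
proof -
  let ?a = "max_expression R (R ! i + R ! j)" and ?b = "pair_exponents (length R) c d"
  have "c < length R" using assms(3,4) by simp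
  have "pair_exponents (length R) i j \<in> expressions R (R ! i + R ! j)"
    using assms(1,2) by (rule pair_exponents_in_expressions)
  then have a: "?a \<in> expressions R (R ! i + R ! j)"
    using max_expression_eq_Max Max_in finite_expressions by (metis empty_iff)
  have "?b \<in> expressions R (R ! c + R ! d)"
    using \<open>c < length R\<close> assms(4) by (rule pair_exponents_in_expressions)
  then have "?b \<le> max_expression R (R ! c + R ! d)"
    using max_expression_eq_Max Max_ge finite_expressions by (metis empty_iff)
  moreover have "?a < ?b"
  proof -
    have a_zero: "?a ! t = 0" if "t \<le> c" for t
    proof (rule ccontr)
      assume "?a ! t \<noteq> 0"
      moreover have "t < length R" using that \<open>c < length R\<close> by simp
      ultimately obtain s where "s < length R" "R ! i + R ! j = R ! t + R ! s"
        using expressions_nth_nonzero[OF a] by blast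
      then show False using factors_above[of t s] that \<open>t < length R\<close> by simp
    qed
    have "length ?a = length R" using a by (simp add: expressions_def)
    moreover have "take c ?a = take c ?b"
      using a_zero \<open>length ?a = length R\<close> assms(3,4)
      by (intro nth_equalityI) (auto simp: pair_exponents_def)
    moreover have "?a ! c < ?b ! c"
      using a_zero \<open>c < length R\<close> by (simp add: pair_exponents_def)
    ultimately show ?thesis
      using \<open>c < length R\<close> unfolding list_less_def lexord_take_index_conv
      by (auto simp: pair_exponents_def)
  qed
  ultimately show ?thesis by simp
qed

section \<open>Exchanging the tops of two covers\<close>

definition raise_top :: "nat \<Rightarrow> nat set \<Rightarrow> nat set" where
  "raise_top k C = insert (k + 5) (insert (k + 3) (insert (k + 1) (C \<inter> {..k})))"

definition lower_top :: "nat \<Rightarrow> nat set \<Rightarrow> nat set" where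
  "lower_top k C = insert (k + 4) (insert (k + 2) (C \<inter> {..k + 1}))"

lemma min_vertex_cover_raise_top:
  assumes "is_min_vertex_cover (k + 5) C" "k + 1 \<in> C"
  shows "is_min_vertex_cover (k + 5) (raise_top k C)"
proof -
  have "is_min_vertex_cover k (C \<inter> {..k})"
    using min_vertex_cover_restrict[OF assms(1), of k] assms(2) by simp
  then have "is_min_vertex_cover (k + 2) (insert (k + 1) (C \<inter> {..k}))"
    by (rule min_vertex_cover_extend_1)
  moreover have "k + 2 + 3 = k + 5" "k + 2 + 1 = k + 3" by simp_all
  ultimately show ?thesis
    unfolding raise_top_def using min_vertex_cover_extend_2 by metis
qed

lemma min_vertex_cover_lower_top:
  assumes "is_min_vertex_cover (k + 5) C" "k + 2 \<in> C"
  shows "is_min_vertex_cover (k + 5) (lower_top k C)"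
proof -
  have "k + 1 + 2 = k + 3" "k + 1 + 1 = k + 2" "k + 3 + 2 = k + 5" "k + 3 + 1 = k + 4"
    by simp_all
  moreover have "is_min_vertex_cover (k + 1) (C \<inter> {..k + 1})"
    using min_vertex_cover_restrict[OF assms(1), of "k + 1"] assms(2) by simp
  ultimately show ?thesis
    unfolding lower_top_def using min_vertex_cover_extend_1 by metis
qed

lemma lower_top_less_raise_top: "mset_set (lower_top k C) < mset_set (raise_top k D)"
proof (rule mset_set_less_mset_setI[where t = "k + 5"])
  fix x assume "k + 5 < x"
  then show "x \<in> lower_top k C \<longleftrightarrow> x \<in> raise_top k D"
    by (auto simp: lower_top_def raise_top_def)
qed (auto simp: lower_top_def raise_top_def)

context
  fixes k :: nat and U V :: "nat set"
  assumes U: "is_min_vertex_cover (k + 5) U" "k + 4 \<in> U" "k + 1 \<in> U"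
    and V: "is_min_vertex_cover (k + 5) V" "k + 5 \<in> V" "k + 2 \<in> V"
begin

lemma top_vertices:
  "k + 5 \<notin> U" "k + 4 \<notin> V" "k + 3 \<in> V" "k + 1 \<notin> V"
proof -
  have succ: "k + 5 = Suc (k + 4)" "k + 4 = Suc (k + 3)" "k + 3 = Suc (k + 2)" "k + 2 = Suc (k + 1)"
    by simp_all
  show "k + 5 \<notin> U"
    using min_vertex_cover_top[OF U(1) _ succ(1)] U(2) by blast
  show "k + 4 \<notin> V"
    using min_vertex_cover_top[OF V(1) V(2) succ(1)] .
  then show "k + 3 \<in> V"
    using min_vertex_cover_edge[OF V(1) succ(2)] by simp
  then show "k + 1 \<notin> V"
    using min_vertex_cover_no_three_consecutive[OF V(1) _ V(3) _ succ(4) succ(3)] by blast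
qed

lemma exchange_subset_mset:
  "mset_set (raise_top k U) + mset_set (lower_top k V) \<subset># mset_set U + mset_set V"
proof (rule mset_set_plus_subset_mset)
  show "finite U" "finite V" using U(1) V(1) by (simp_all add: finite_min_vertex_cover)
  show "raise_top k U \<union> lower_top k V \<subseteq> U \<union> V"
    using U V top_vertices unfolding raise_top_def lower_top_def by auto
  have "k + 2 \<in> U \<or> k + 3 \<in> U"
    using min_vertex_cover_edge[OF U(1), of "k + 3" "k + 2"] by simp
  moreover have "raise_top k U \<inter> lower_top k V \<subseteq> U \<inter> V \<inter> {..k}"
    using top_vertices unfolding raise_top_def lower_top_def by auto
  ultimately show "raise_top k U \<inter> lower_top k V \<subset> U \<inter> V"
    using V(3) top_vertices(3) by auto
qed

lemma factor_avoiding_top: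
  assumes S: "is_min_vertex_cover (k + 5) S" and T: "is_min_vertex_cover (k + 5) T"
    and factors: "mset_set S + mset_set T = mset_set U + mset_set V"
    and "k + 5 \<notin> S" "k + 3 \<notin> S"
  shows "k + 4 \<in> S" "k + 2 \<in> S" "k + 1 \<in> S"
proof -
  have fin: "finite S" "finite T" "finite U" "finite V"
    using S T U(1) V(1) by (simp_all add: finite_min_vertex_cover)
  have union: "S \<union> T = U \<union> V" and inter: "S \<inter> T = U \<inter> V"
    using mset_set_plus_eqD[OF fin factors] by simp_all
  have succ: "k + 5 = Suc (k + 4)" "k + 4 = Suc (k + 3)" "k + 3 = Suc (k + 2)" "k + 2 = Suc (k + 1)"
    by simp_all
  show "k + 4 \<in> S" using min_vertex_cover_edge[OF S succ(1)] \<open>k + 5 \<notin> S\<close> by simp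
  show "k + 2 \<in> S" using min_vertex_cover_edge[OF S succ(3)] \<open>k + 3 \<notin> S\<close> by simp
  have "k + 4 \<notin> T" using \<open>k + 4 \<in> S\<close> inter top_vertices(2) by blast
  then have "k + 3 \<in> T" using min_vertex_cover_edge[OF T succ(2)] by simp
  then have "k + 3 \<notin> U" using \<open>k + 3 \<notin> S\<close> inter top_vertices(3) by blast
  then have "k + 2 \<in> U" using min_vertex_cover_edge[OF U(1) succ(3)] by simp
  then have "k + 2 \<in> T" using V(3) inter by blast
  then have "k + 1 \<notin> T"
    using min_vertex_cover_no_three_consecutive[OF T _ _ \<open>k + 3 \<in> T\<close> succ(4) succ(3)] by blast
  then show "k + 1 \<in> S" using U(3) union by blast
qed

lemma lower_top_less_factor:
  assumes S: "is_min_vertex_cover (k + 5) S" and T: "is_min_vertex_cover (k + 5) T"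
    and factors: "mset_set S + mset_set T = mset_set U + mset_set V"
  shows "mset_set (lower_top k V) < mset_set S"
proof -
  let ?W = "lower_top k V"
  have S_bound: "x \<le> k + 5" if "x \<in> S" for x
    using min_vertex_cover_subset[OF S] that by auto
  have W_iff: "x \<in> ?W \<longleftrightarrow> (x \<in> V \<and> x \<le> k + 1) \<or> x = k + 2 \<or> x = k + 4" for x
    by (auto simp: lower_top_def)
  have "\<exists>t\<in>S. t \<notin> ?W \<and> (\<forall>x>t. x \<in> ?W \<longleftrightarrow> x \<in> S)"
  proof (cases "k + 5 \<in> S")
    case True
    then show ?thesis by (intro bexI[of _ "k + 5"]) (auto simp: W_iff dest: S_bound)
  next
    case False
    then have "k + 4 \<in> S"
      using min_vertex_cover_edge[OF S, of "k + 5" "k + 4"] by simp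
    show ?thesis
    proof (cases "k + 3 \<in> S")
      case True
      show ?thesis
      proof (intro bexI[of _ "k + 3"] conjI allI impI)
        fix x assume "k + 3 < x"
        then have "x = k + 4 \<or> x = k + 5 \<or> k + 5 < x" by arith
        then show "x \<in> ?W \<longleftrightarrow> x \<in> S"
          using \<open>k + 4 \<in> S\<close> \<open>k + 5 \<notin> S\<close> by (auto simp: W_iff dest: S_bound)
      qed (simp_all add: W_iff True)
    next
      case False
      have "k + 2 \<in> S" "k + 1 \<in> S"
        using factor_avoiding_top[OF S T factors \<open>k + 5 \<notin> S\<close> False] by simp_all
      show ?thesis
      proof (intro bexI[of _ "k + 1"] conjI allI impI)
        fix x assume "k + 1 < x"
        then have "x = k + 2 \<or> x = k + 3 \<or> x = k + 4 \<or> x = k + 5 \<or> k + 5 < x" by arith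
        then show "x \<in> ?W \<longleftrightarrow> x \<in> S"
          using \<open>k + 2 \<in> S\<close> \<open>k + 4 \<in> S\<close> \<open>k + 5 \<notin> S\<close> False
          by (auto simp: W_iff dest: S_bound)
      qed (use top_vertices(4) \<open>k + 1 \<in> S\<close> in \<open>simp_all add: W_iff\<close>)
    qed
  qed
  then obtain t where "t \<in> S" "t \<notin> ?W" "\<forall>x>t. x \<in> ?W \<longleftrightarrow> x \<in> S" by blast
  moreover have "finite S" "finite ?W"
    using finite_min_vertex_cover[OF S] by (simp_all add: lower_top_def)
  ultimately show ?thesis by (intro mset_set_less_mset_setI[of ?W S t]) auto
qed

lemma exchange_rooted_gt:
  "rooted_gt (k + 5) (mset_set (raise_top k U) + mset_set (lower_top k V)) (mset_set U + mset_set V)"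
proof -
  let ?R = "rooted_list (k + 5)"
  have set_R: "set ?R = cover_gens (k + 5)" by (simp add: set_rooted_list)
  have index_less: "i < j" if "i < length ?R" "j < length ?R" "?R ! i < ?R ! j" for i j
    using sorted_wrt_less_nth_imp_less[OF sorted_rooted_list that] .
  have "\<exists>i<length ?R. ?R ! i = mset_set C" if "is_min_vertex_cover (k + 5) C" for C
    using that set_R by (auto simp: cover_gens_eq_image in_set_conv_nth)
  then obtain iu iv ip iw where
    iu: "iu < length ?R" "?R ! iu = mset_set U" and iv: "iv < length ?R" "?R ! iv = mset_set V" and
    ip: "ip < length ?R" "?R ! ip = mset_set (raise_top k U)" and
    iw: "iw < length ?R" "?R ! iw = mset_set (lower_top k V)"
    using U V min_vertex_cover_raise_top min_vertex_cover_lower_top by meson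
  have "iw < ip"
    using index_less[OF iw(1) ip(1)] iw(2) ip(2) lower_top_less_raise_top by simp
  moreover have "iw < s"
    if s: "s < length ?R" and t: "t < length ?R" and factors: "?R ! s + ?R ! t = ?R ! iu + ?R ! iv"
    for s t
  proof -
    obtain S T where "is_min_vertex_cover (k + 5) S" "?R ! s = mset_set S"
      and "is_min_vertex_cover (k + 5) T" "?R ! t = mset_set T"
      using nth_mem[OF s] nth_mem[OF t] set_R by (auto simp: cover_gens_eq_image)
    then have "?R ! iw < ?R ! s"
      using lower_top_less_factor factors iu(2) iv(2) iw(2) by simp
    then show "iw < s" using index_less iw(1) s by blast
  qed
  ultimately have "max_expression ?R (?R ! iu + ?R ! iv) < max_expression ?R (?R ! iw + ?R ! ip)"
    using iu(1) iv(1) ip(1) by (intro max_expression_less) auto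
  then show ?thesis
    unfolding rooted_gt_def lexordp_less_iff_less using iu iv ip iw by (simp add: add.commute)
qed

end

theorem lemma4p1:
  fixes n :: nat and u v :: monomial
  assumes "n \<ge> 5"
    and "u \<in> cover_gens n" and "v \<in> cover_gens n"
    and "{#n - 1, n - 4#} \<subseteq># u"
    and "{#n, n - 3#} \<subseteq># v"
  shows "u + v \<notin> min_gens_sq (cover_gens n) \<and>
         (\<exists>p \<in> cover_gens n. \<exists>w \<in> cover_gens n.
             p + w \<subseteq># u + v \<and> rooted_gt n (p + w) (u + v))"
proof -
  obtain k where n: "n = k + 5" using assms(1) by (metis add.commute le_Suc_ex)
  obtain U V where U: "is_min_vertex_cover n U" "u = mset_set U"
    and V: "is_min_vertex_cover n V" "v = mset_set V"
    using assms(2,3) by (auto simp: cover_gens_eq_image)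
  have "n - 1 = k + 4" "n - 4 = k + 1" "n - 3 = k + 2" using n by simp_all
  then have "k + 4 \<in># u" "k + 1 \<in># u" "k + 5 \<in># v" "k + 2 \<in># v"
    using mset_subset_eqD[OF assms(4)] mset_subset_eqD[OF assms(5)] n by simp_all
  then have "k + 4 \<in> U" "k + 1 \<in> U" "k + 5 \<in> V" "k + 2 \<in> V"
    using U V by (simp_all add: finite_min_vertex_cover)
  let ?p = "mset_set (raise_top k U)" and ?w = "mset_set (lower_top k V)"
  have "?p \<in> cover_gens n" "?w \<in> cover_gens n"
    using U V \<open>k + 1 \<in> U\<close> \<open>k + 2 \<in> V\<close> n min_vertex_cover_raise_top min_vertex_cover_lower_top
    by (auto simp: cover_gens_eq_image)
  moreover have "?p + ?w \<subset># u + v" "rooted_gt n (?p + ?w) (u + v)"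
    using exchange_subset_mset exchange_rooted_gt U V n \<open>k + 4 \<in> U\<close> \<open>k + 1 \<in> U\<close> \<open>k + 5 \<in> V\<close> \<open>k + 2 \<in> V\<close>
    by auto
  ultimately show ?thesis
    unfolding min_gens_sq_def F2_def by (auto intro: subset_mset.less_imp_le)
qed

end
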